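(* Let $(G,H)$ be a rooted graph and let $J_{\max}\subsetneq H$ be a primal subgraph of $(G,H)$ that is maximal with respect to inclusion among primal subgraphs. Then $m(J_{\max},H)<m(G,H)$.
   Context: For a graph $F$, $v_F,e_F$ are its numbers of vertices and edges. A rooted graph $(G,H)$ consists of a graph $H$ and an induced subgraph $G\subseteq H$ (the roots), with $e_H>e_G$. For subgraphs $A\subsetneq J\subseteq H$, $d(A,J)=(e_J-e_A)/(v_J-v_A)$ and $m(A,H)=\max_{A\subsetneq J\subseteq H}d(A,J)$. A subgraph $J$ with $G\subsetneq J\subseteq H$ and $d(G,J)=m(G,H)$ is called primal for $(G,H)$. *)

theory Defs
  imports Complex_Main "HOL-Library.Extended_Real"
begin

type_synonym 'a graph = "'a set \<times> 'a set set"

definition is_graph :: "'a graph \<Rightarrow> bool" where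
  "is_graph F \<longleftrightarrow> finite (fst F) \<and> (\<forall>e\<in>snd F. e \<subseteq> fst F \<and> card e = 2)"

definition nv :: "'a graph \<Rightarrow> nat" where "nv F = card (fst F)"
definition ne :: "'a graph \<Rightarrow> nat" where "ne F = card (snd F)"

definition subgraph :: "'a graph \<Rightarrow> 'a graph \<Rightarrow> bool" where
  "subgraph A J \<longleftrightarrow> is_graph A \<and> is_graph J \<and> fst A \<subseteq> fst J \<and> snd A \<subseteq> snd J"

definition induced_subgraph :: "'a graph \<Rightarrow> 'a graph \<Rightarrow> bool" where
  "induced_subgraph G H \<longleftrightarrow> subgraph G H \<and> snd G = {e \<in> snd H. e \<subseteq> fst G}"

definition rooted_graph :: "'a graph \<Rightarrow> 'a graph \<Rightarrow> bool" where
  "rooted_graph G H \<longleftrightarrow> is_graph H \<and> induced_subgraph G H \<and> ne G < ne H"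

text \<open>d(A,J) = (e_J - e_A)/(v_J - v_A); when v_J = v_A (and J strictly contains A,
  so e_J > e_A) the density is taken to be +\<infinity>.\<close>
definition dens :: "'a graph \<Rightarrow> 'a graph \<Rightarrow> ereal" where
  "dens A J = (if nv J = nv A then \<infinity>
     else ereal ((real (ne J) - real (ne A)) / (real (nv J) - real (nv A))))"

definition mdens :: "'a graph \<Rightarrow> 'a graph \<Rightarrow> ereal" where
  "mdens A H = Max {dens A J | J. subgraph A J \<and> A \<noteq> J \<and> subgraph J H}"

definition primal :: "'a graph \<Rightarrow> 'a graph \<Rightarrow> 'a graph \<Rightarrow> bool" where
  "primal G H J \<longleftrightarrow> subgraph G J \<and> G \<noteq> J \<and> subgraph J H \<and> dens G J = mdens G H"

end

theory Submission
  imports Defs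
begin

text \<open>Let \<open>m = m(G,H) = d(G,J\<^sub>m\<^sub>a\<^sub>x)\<close>. A primal subgraph is induced in \<open>H\<close>, since adding an
  edge of \<open>H\<close> would raise its density above \<open>m\<close>; hence every \<open>J \<supsetneq> J\<^sub>m\<^sub>a\<^sub>x\<close> has more
  vertices than \<open>J\<^sub>m\<^sub>a\<^sub>x\<close>. Then \<open>d(G,J)\<close> is a mediant of \<open>d(G,J\<^sub>m\<^sub>a\<^sub>x)\<close> and \<open>d(J\<^sub>m\<^sub>a\<^sub>x,J)\<close>, so
  \<open>d(J\<^sub>m\<^sub>a\<^sub>x,J) \<ge> m\<close> would force \<open>d(G,J) = m\<close>, i.e. a primal subgraph strictly above
  \<open>J\<^sub>m\<^sub>a\<^sub>x\<close>, contradicting maximality.\<close>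

lemma mediant_ge:
  fixes a b c d :: real
  assumes "0 < b" "0 < d" "a / b \<le> c / d"
  shows "a / b \<le> (a + c) / (b + d)"
proof -
  have "a * d \<le> c * b"
    using assms by (simp add: divide_simps)
  then have "a * (b + d) \<le> (a + c) * b"
    by (simp add: algebra_simps)
  then show ?thesis
    using assms by (simp add: divide_simps)
qed

lemma subgraph_trans: "subgraph A B \<Longrightarrow> subgraph B C \<Longrightarrow> subgraph A C"
  unfolding subgraph_def by auto

lemma finite_edges: "is_graph H \<Longrightarrow> finite (snd H)"
  unfolding is_graph_def by (meson Pow_iff finite_Pow_iff finite_subset subsetI)

lemma finite_subgraphs:
  assumes "is_graph H"
  shows "finite {J. subgraph J H}"
proof (rule finite_subset)
  show "{J. subgraph J H} \<subseteq> Pow (fst H) \<times> Pow (snd H)"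
    unfolding subgraph_def by (auto simp: mem_Times_iff)
  show "finite (Pow (fst H) \<times> Pow (snd H))"
    using assms finite_edges unfolding is_graph_def by blast
qed

lemma finite_dens_values:
  assumes "is_graph H"
  shows "finite {dens A J | J. subgraph A J \<and> A \<noteq> J \<and> subgraph J H}"
  by (rule finite_subset[OF _ finite_imageI[OF finite_subgraphs[OF assms], of "dens A"]]) blast

lemma dens_le_mdens:
  assumes "is_graph H" "subgraph A J" "A \<noteq> J" "subgraph J H"
  shows "dens A J \<le> mdens A H"
  unfolding mdens_def by (rule Max_ge[OF finite_dens_values[OF assms(1)]]) (use assms in blast)

lemma mdens_attained:
  assumes "is_graph H" "subgraph A H" "A \<noteq> H"
  obtains J where "subgraph A J" "A \<noteq> J" "subgraph J H" "mdens A H = dens A J"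
proof -
  have "subgraph H H"
    using assms unfolding subgraph_def by auto
  then have "{dens A J | J. subgraph A J \<and> A \<noteq> J \<and> subgraph J H} \<noteq> {}"
    using assms by blast
  then have "mdens A H \<in> {dens A J | J. subgraph A J \<and> A \<noteq> J \<and> subgraph J H}"
    unfolding mdens_def using Max_in finite_dens_values[OF assms(1)] by blast
  then show ?thesis
    using that by auto
qed

lemma dens_eq_ereal:
  "nv A < nv J \<Longrightarrow>
    dens A J = ereal ((real (ne J) - real (ne A)) / (real (nv J) - real (nv A)))"
  unfolding dens_def by simp

lemma dens_mediant_ge:
  assumes "nv A < nv B" "nv B < nv C" "dens A B \<le> dens B C"
  shows "dens A B \<le> dens A C"
proof -
  have "(real (ne B) - real (ne A)) / (real (nv B) - real (nv A))
      \<le> ((real (ne B) - real (ne A)) + (real (ne C) - real (ne B)))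
        / ((real (nv B) - real (nv A)) + (real (nv C) - real (nv B)))"
    using assms by (intro mediant_ge) (simp_all add: dens_eq_ereal)
  then show ?thesis
    using assms by (simp add: dens_eq_ereal)
qed

lemma induced_subgraph_nv_less:
  assumes "induced_subgraph A H" "subgraph A J" "A \<noteq> J" "subgraph J H"
  shows "nv A < nv J"
proof -
  have A_edges: "snd A = {e \<in> snd H. e \<subseteq> fst A}"
    using assms(1) unfolding induced_subgraph_def by blast
  have J: "snd J \<subseteq> snd H" "\<forall>e\<in>snd J. e \<subseteq> fst J" "finite (fst J)"
    using assms(4) unfolding subgraph_def is_graph_def by auto
  have AJ: "fst A \<subseteq> fst J" "snd A \<subseteq> snd J"
    using assms(2) unfolding subgraph_def by auto
  have "fst A \<noteq> fst J"
  proof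
    assume same_vertices: "fst A = fst J"
    then have "snd J \<subseteq> snd A"
      using A_edges J(1,2) by blast
    then have "A = J"
      using same_vertices AJ(2) by (simp add: prod_eq_iff)
    with assms(3) show False ..
  qed
  with AJ(1) have "fst A \<subset> fst J"
    by blast
  then show ?thesis
    unfolding nv_def using J(3) by (rule psubset_card_mono[rotated])
qed

lemma dens_insert_edge_gt:
  assumes "nv A < nv J" "e \<notin> snd J" "finite (snd J)"
  shows "dens A J < dens A (fst J, insert e (snd J))"
proof -
  have "ne (fst J, insert e (snd J)) = ne J + 1"
    using assms(2,3) unfolding ne_def by simp
  moreover have "nv (fst J, insert e (snd J)) = nv J"
    unfolding nv_def by simp
  ultimately show ?thesis
    using assms(1) by (simp add: dens_eq_ereal divide_strict_right_mono)
qed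

lemma primal_induced:
  assumes "is_graph H" "induced_subgraph G H" "primal G H J"
  shows "induced_subgraph J H"
proof -
  have GJ: "subgraph G J" "G \<noteq> J" "subgraph J H" "dens G J = mdens G H"
    using assms(3) unfolding primal_def by auto
  have fewer_vertices: "nv G < nv J"
    using induced_subgraph_nv_less[OF assms(2) GJ(1-3)] .
  have "e \<in> snd J" if e: "e \<in> snd H" "e \<subseteq> fst J" for e
  proof (rule ccontr)
    assume e_new: "e \<notin> snd J"
    define J' where "J' = (fst J, insert e (snd J))"
    have "is_graph J'"
      using GJ(3) assms(1) e unfolding J'_def subgraph_def is_graph_def by auto
    then have "subgraph G J'" "subgraph J' H"
      using GJ(1,3) e unfolding subgraph_def J'_def by auto
    moreover have "G \<noteq> J'"
      using fewer_vertices unfolding J'_def nv_def by auto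
    ultimately have "dens G J' \<le> dens G J"
      using dens_le_mdens[OF assms(1)] GJ(4) by simp
    moreover have "finite (snd J)"
      using GJ(3) finite_edges unfolding subgraph_def by blast
    then have "dens G J < dens G J'"
      unfolding J'_def using dens_insert_edge_gt fewer_vertices e_new by blast
    ultimately show False
      by simp
  qed
  then show ?thesis
    using GJ(3) unfolding induced_subgraph_def subgraph_def is_graph_def by auto
qed

lemma primal_extend:
  assumes "is_graph H" "induced_subgraph G H" "primal G H J"
    and "subgraph J J'" "J \<noteq> J'" "subgraph J' H" "mdens G H \<le> dens J J'"
  shows "primal G H J'"
proof -
  have GJ: "subgraph G J" "G \<noteq> J" "subgraph J H" "dens G J = mdens G H"
    using assms(3) unfolding primal_def by auto
  have "nv G < nv J"
    using induced_subgraph_nv_less[OF assms(2) GJ(1-3)] .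
  moreover have "nv J < nv J'"
    using induced_subgraph_nv_less[OF primal_induced[OF assms(1-3)] assms(4-6)] .
  ultimately have ge: "mdens G H \<le> dens G J'" and "G \<noteq> J'"
    using dens_mediant_ge[of G J J'] GJ(4) assms(7) by auto
  have "subgraph G J'"
    using subgraph_trans GJ(1) assms(4) by blast
  have "dens G J' = mdens G H"
    using dens_le_mdens[OF assms(1) \<open>subgraph G J'\<close> \<open>G \<noteq> J'\<close> assms(6)] ge by (rule antisym)
  with \<open>subgraph G J'\<close> \<open>G \<noteq> J'\<close> assms(6) show ?thesis
    unfolding primal_def by blast
qed

theorem lemma14:
  fixes G H Jmax :: "'a graph"
  assumes "rooted_graph G H"
    and "primal G H Jmax"
    and "Jmax \<noteq> H"
    and "\<forall>J. primal G H J \<and> subgraph Jmax J \<longrightarrow> J = Jmax"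
  shows "mdens Jmax H < mdens G H"
proof -
  have H: "is_graph H" "induced_subgraph G H"
    using assms(1) unfolding rooted_graph_def by auto
  have "subgraph Jmax H"
    using assms(2) unfolding primal_def by auto
  then obtain J where J: "subgraph Jmax J" "Jmax \<noteq> J" "subgraph J H"
    and attained: "mdens Jmax H = dens Jmax J"
    using mdens_attained[OF H(1) _ assms(3)] by blast
  show ?thesis
  proof (rule ccontr)
    assume "\<not> ?thesis"
    then have "primal G H J"
      using primal_extend[OF H assms(2) J] attained by simp
    then show False
      using assms(4) J(1,2) by blast
  qed
qed

end
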